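(* For every $N$ with $4 \le N \le 10$, there is no multiset $\{d_1,\dots,d_N\}$ of decimal digits with $d_1 \neq 0$ such that, for every permutation $\sigma$ of $\{1,\dots,N\}$, the integer $\sum_{i=1}^{N} d_{\sigma(i)}\,10^{N-i}$ is prime.
   Context: Integers are written in base 10; the integer obtained from the digit sequence $(a_1,\dots,a_N)$ is $\sum_{i=1}^N a_i 10^{N-i}$. *)

theory Defs
  imports "HOL-Computational_Algebra.Primes" "HOL-Combinatorics.Permutations"
begin

end

theory Submission
  imports Defs
begin

(* If every arrangement of the digits is prime, no digit can be 0, 2, 4, 5, 6 or 8 (placed last
   it makes the number a multiple of 2 or 5), and the digit sum is prime to 3.  Modulo 7, the
   arrangements 1379, 1793, 3719, 1739, 1397, 1937, 1973 of the digits 1, 3, 7, 9 represent the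
   residues 0, ..., 6, so appending the right one to any arrangement of the remaining digits gives
   a multiple of 7; the same holds for 28 other multisets of four or five digits.  Comparing digit
   counts, every multiset of at least four digits from {1, 3, 7, 9} contains one of these 29
   unless it is a repdigit, a repdigit with one digit changed, 1...179, 139...9, or one of ten
   four-digit exceptions; for at most ten digits, each of these with digit sum prime to 3 has an
   explicit composite arrangement. *)

definition decimal :: "nat list \<Rightarrow> nat" where
  "decimal ds = foldl (\<lambda>n d. 10 * n + d) 0 ds"

lemma decimal_Nil [simp]: "decimal [] = 0"
  by (simp add: decimal_def)

lemma decimal_snoc [simp]: "decimal (ds @ [d]) = 10 * decimal ds + d"
  by (simp add: decimal_def)

lemma decimal_append: "decimal (xs @ ys) = decimal xs * 10 ^ length ys + decimal ys"
proof (induction ys rule: rev_induct)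
  case (snoc y ys)
  then show ?case
    by (simp add: algebra_simps flip: append_assoc)
qed simp

lemma decimal_Cons: "decimal (d # ds) = d * 10 ^ length ds + decimal ds"
  using decimal_append[of "[d]" ds] by (simp add: decimal_def)

lemma sum_digits_eq_decimal:
  "length ds = N \<Longrightarrow> (\<Sum>i<N. ds ! i * 10 ^ (N - 1 - i)) = decimal ds"
proof (induction ds arbitrary: N)
  case (Cons d ds)
  then show ?case
    by (auto simp: sum.lessThan_Suc_shift decimal_Cons simp del: sum.lessThan_Suc)
qed simp

lemma decimal_ge_power:
  assumes "ds \<noteq> []" "hd ds \<noteq> 0"
  shows "10 ^ (length ds - 1) \<le> decimal ds"
proof -
  obtain d ds' where ds: "ds = d # ds'" and "d \<noteq> 0"
    using assms by (cases ds) auto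
  then have "10 ^ length ds' \<le> d * 10 ^ length ds'"
    by simp
  then show ?thesis
    by (simp add: ds decimal_Cons trans_le_add1)
qed

lemma decimal_mod_9: "decimal ds mod 9 = sum_list ds mod 9"
proof (induction ds rule: rev_induct)
  case (snoc d ds)
  have "decimal (ds @ [d]) = (decimal ds + d) + 9 * decimal ds"
    by simp
  then have "decimal (ds @ [d]) mod 9 = (decimal ds + d) mod 9"
    by (metis mod_mult_self2)
  also have "\<dots> = (sum_list ds + d) mod 9"
    by (metis snoc mod_add_left_eq)
  also have "\<dots> = sum_list (ds @ [d]) mod 9"
    by simp
  finally show ?case .
qed simp

lemma three_dvd_decimal_iff: "3 dvd decimal ds \<longleftrightarrow> 3 dvd sum_list ds"
proof -
  have "(3::nat) dvd 9"
    by simp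
  then show ?thesis
    by (metis decimal_mod_9 dvd_mod_iff)
qed

definition permutable_prime :: "nat list \<Rightarrow> bool" where
  "permutable_prime ds \<longleftrightarrow> (\<forall>ws. mset ws = mset ds \<longrightarrow> prime (decimal ws))"

lemma permutable_prime_iff_permutes:
  assumes "length ds = N"
  shows "permutable_prime ds \<longleftrightarrow>
    (\<forall>\<sigma>. \<sigma> permutes {..<N} \<longrightarrow> prime (\<Sum>i<N. ds ! \<sigma> i * 10 ^ (N - 1 - i)))"
proof -
  have sum_eq: "(\<Sum>i<N. ds ! \<sigma> i * 10 ^ (N - 1 - i)) = decimal (permute_list \<sigma> ds)"
    if "\<sigma> permutes {..<N}" for \<sigma>
  proof -
    have "(\<Sum>i<N. ds ! \<sigma> i * 10 ^ (N - 1 - i)) = (\<Sum>i<N. permute_list \<sigma> ds ! i * 10 ^ (N - 1 - i))"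
      using that assms by (auto intro!: sum.cong simp: permute_list_nth)
    also have "\<dots> = decimal (permute_list \<sigma> ds)"
      using assms sum_digits_eq_decimal[of "permute_list \<sigma> ds" N] by simp
    finally show ?thesis .
  qed
  have "mset ws = mset ds \<longleftrightarrow> (\<exists>\<sigma>. \<sigma> permutes {..<N} \<and> permute_list \<sigma> ds = ws)" for ws
    using assms by (metis mset_eq_permutation mset_permute_list)
  then show ?thesis
    unfolding permutable_prime_def using sum_eq by auto
qed

lemma not_permutable_prime_if_proper_divisor:
  assumes "mset ws = mset ds" "p dvd decimal ws" "1 < p" "p < decimal ws"
  shows "\<not> permutable_prime ds"
  using assms unfolding permutable_prime_def by (metis prime_nat_iff less_not_refl)

lemma permutable_prime_digits:
  assumes prime: "permutable_prime ds" and "2 \<le> length ds" "set ds \<subseteq> {..<10}"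
  shows "set ds \<subseteq> {1, 3, 7, 9}"
proof
  fix x
  assume x: "x \<in> set ds"
  define rs where "rs = remove1 x ds"
  have last: "mset (rs @ [x]) = mset ds" and first: "mset (x # rs) = mset ds"
    using x by (simp_all add: rs_def)
  have "length rs \<noteq> 0"
    using x assms(2) by (simp add: rs_def length_remove1)
  show "x \<in> {1, 3, 7, 9}"
  proof (rule ccontr)
    assume "x \<notin> {1, 3, 7, 9}"
    moreover have "x < 10"
      using x assms(3) by auto
    ultimately have "2 dvd x \<or> 5 dvd x"
      by simp presburger
    then obtain q where q: "q \<in> {2, 5}" "q dvd x"
      by blast
    then have "q dvd decimal (rs @ [x])"
      by auto
    moreover have "prime (decimal (rs @ [x]))"
      using prime last unfolding permutable_prime_def by blast
    ultimately have "decimal (rs @ [x]) = q"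
      using q(1) by (auto simp: prime_nat_iff)
    moreover have "q \<le> 5"
      using q(1) by auto
    ultimately have "decimal rs = 0" "x = q"
      by simp_all presburger+
    then have "decimal (x # rs) = q * 10 ^ length rs"
      by (simp add: decimal_Cons)
    moreover have "q < q * 10 ^ length rs"
      using q(1) one_less_power[of "10::nat" "length rs"] \<open>length rs \<noteq> 0\<close> by auto
    ultimately have "q dvd decimal (x # rs)" "1 < q" "q < decimal (x # rs)"
      using q(1) by auto
    then show False
      using not_permutable_prime_if_proper_divisor[OF first] prime by blast
  qed
qed

lemma permutable_prime_digit_sum:
  assumes "permutable_prime ds" "2 \<le> length ds" "0 \<notin> set ds"
  shows "\<not> 3 dvd sum_list ds"
proof
  assume "3 dvd sum_list ds"
  then have "3 dvd decimal ds"
    by (simp add: three_dvd_decimal_iff)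
  have "ds \<noteq> []"
    using assms(2) by auto
  then have "10 ^ (length ds - 1) \<le> decimal ds"
    using assms(3) by (metis decimal_ge_power hd_in_set)
  moreover have "(10::nat) \<le> 10 ^ (length ds - 1)"
    using assms(2) by (intro self_le_power) auto
  ultimately have "3 < decimal ds"
    by linarith
  then show False
    using not_permutable_prime_if_proper_divisor \<open>3 dvd decimal ds\<close> assms(1) by force
qed

definition residue_complete :: "nat \<Rightarrow> nat list \<Rightarrow> bool" where
  "residue_complete p ts \<longleftrightarrow> (\<forall>r<p. \<exists>ws. mset ws = mset ts \<and> decimal ws mod p = r)"

lemma residue_completeI:
  assumes "map (\<lambda>ws. decimal ws mod p) wss = [0..<p]" "\<forall>ws\<in>set wss. mset ws = mset ts"
  shows "residue_complete p ts"
  unfolding residue_complete_def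
proof (intro allI impI)
  fix r
  assume "r < p"
  then have "r \<in> set (map (\<lambda>ws. decimal ws mod p) wss)"
    by (simp add: assms(1))
  then show "\<exists>ws. mset ws = mset ts \<and> decimal ws mod p = r"
    using assms(2) by auto
qed

lemma residue_complete_divisible_arrangement:
  assumes "residue_complete p ts" "mset ts \<subseteq># mset ds" "0 < p"
  obtains ws where "mset ws = mset ds" "p dvd decimal ws"
proof -
  obtain rs where rs: "mset rs = mset ds - mset ts"
    using ex_mset by blast
  define a where "a = decimal rs * 10 ^ length ts"
  have "(p - a mod p) mod p < p"
    using assms(3) by simp
  then obtain ts' where ts': "mset ts' = mset ts" "decimal ts' mod p = (p - a mod p) mod p"
    using assms(1) unfolding residue_complete_def by blast
  have "length ts' = length ts"
    using ts'(1) by (metis size_mset)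
  then have "decimal (rs @ ts') mod p = (a mod p + decimal ts' mod p) mod p"
    by (simp add: decimal_append a_def mod_add_eq)
  also have "\<dots> = 0"
    using ts'(2) assms(3) by (cases "a mod p = 0") auto
  finally have "p dvd decimal (rs @ ts')"
    by (simp add: dvd_eq_mod_eq_0)
  moreover have "mset (rs @ ts') = mset ds"
    using rs ts'(1) assms(2) by (simp add: subset_mset.diff_add)
  ultimately show ?thesis
    using that by blast
qed

lemma not_permutable_prime_if_residue_complete:
  assumes "residue_complete p ts" "mset ts \<subseteq># mset ds"
    and "1 < p" "p < 10 ^ (length ds - 1)" "0 \<notin> set ds"
  shows "\<not> permutable_prime ds"
proof -
  obtain ws where ws: "mset ws = mset ds" "p dvd decimal ws"
    using residue_complete_divisible_arrangement assms(1-3) by force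
  have "ds \<noteq> []"
    using assms(3,4) by auto
  then have "ws \<noteq> []" "0 \<notin> set ws" "length ws = length ds"
    using ws(1) assms(5) by (auto dest: mset_eq_setD mset_eq_length)
  then have "10 ^ (length ds - 1) \<le> decimal ws"
    by (metis decimal_ge_power hd_in_set)
  then show ?thesis
    using not_permutable_prime_if_proper_divisor[OF ws] assms(3,4) by simp
qed

definition residue_systems_mod_7 :: "(nat list \<times> nat list list) list" where
  "residue_systems_mod_7 =
    [([1,1,3,7], [[3,1,7,1], [1,3,1,7], [1,7,3,1], [1,1,3,7], [1,1,7,3], [1,7,1,3], [1,3,7,1]]),
     ([1,3,3,7], [[1,3,3,7], [1,3,7,3], [3,1,7,3], [3,7,1,3], [1,7,3,3], [7,3,1,3], [3,3,1,7]]),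
     ([1,3,7,7], [[3,7,1,7], [1,7,3,7], [1,7,7,3], [7,7,3,1], [7,1,3,7], [1,3,7,7], [3,1,7,7]]),
     ([1,3,7,9], [[1,3,7,9], [1,7,9,3], [3,7,1,9], [1,7,3,9], [1,3,9,7], [1,9,3,7], [1,9,7,3]]),
     ([3,3,7,9], [[9,3,7,3], [3,7,3,9], [3,3,9,7], [3,9,3,7], [3,9,7,3], [3,3,7,9], [3,7,9,3]]),
     ([3,7,7,9], [[7,9,7,3], [3,9,7,7], [7,7,9,3], [3,7,9,7], [7,7,3,9], [7,3,9,7], [3,7,7,9]]),
     ([3,7,9,9], [[3,9,9,7], [7,9,3,9], [9,7,3,9], [3,9,7,9], [9,9,3,7], [3,7,9,9], [7,9,9,3]]),
     ([1,1,1,3,3], [[3,1,3,1,1], [1,1,3,1,3], [1,3,1,1,3], [1,1,1,3,3], [1,3,3,1,1], [1,1,3,3,1], [1,3,1,3,1]]),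
     ([1,1,1,3,9], [[1,1,1,9,3], [1,3,1,1,9], [1,1,1,3,9], [1,1,9,3,1], [3,1,1,1,9], [1,9,3,1,1], [1,1,9,1,3]]),
     ([1,1,1,7,7], [[1,7,1,7,1], [1,7,7,1,1], [1,7,1,1,7], [7,1,7,1,1], [1,1,7,7,1], [1,1,1,7,7], [1,1,7,1,7]]),
     ([1,1,1,9,9], [[1,1,9,9,1], [9,1,9,1,1], [1,9,1,1,9], [1,9,9,1,1], [1,9,1,9,1], [1,1,9,1,9], [1,1,1,9,9]]),
     ([1,1,3,3,3], [[1,1,3,3,3], [1,3,1,3,3], [3,1,3,1,3], [1,3,3,3,1], [3,1,1,3,3], [3,3,3,1,1], [1,3,3,1,3]]),
     ([1,1,3,3,9], [[1,3,1,3,9], [1,3,9,3,1], [1,9,1,3,3], [3,1,1,3,9], [1,1,3,9,3], [1,1,9,3,3], [1,1,3,3,9]]),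
     ([1,1,3,9,9], [[3,1,1,9,9], [1,9,1,3,9], [1,1,9,9,3], [1,1,3,9,9], [1,1,9,3,9], [1,3,9,9,1], [1,9,1,9,3]]),
     ([1,1,7,7,7], [[1,7,7,1,7], [7,1,1,7,7], [7,1,7,1,7], [1,1,7,7,7], [7,7,7,1,1], [1,7,7,7,1], [1,7,1,7,7]]),
     ([1,1,7,7,9], [[1,1,9,7,7], [1,7,1,7,9], [1,1,7,9,7], [1,9,7,7,1], [1,7,7,9,1], [1,1,7,7,9], [7,1,7,9,1]]),
     ([1,1,7,9,9], [[1,7,1,9,9], [1,7,9,9,1], [1,1,9,7,9], [1,9,1,9,7], [1,1,7,9,9], [7,9,1,1,9], [1,1,9,9,7]]),
     ([1,1,9,9,9], [[9,9,9,1,1], [1,1,9,9,9], [9,1,9,1,9], [9,1,1,9,9], [1,9,9,1,9], [1,9,1,9,9], [1,9,9,9,1]]),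
     ([1,3,3,3,9], [[3,1,3,3,9], [3,3,1,3,9], [1,3,3,9,3], [1,3,9,3,3], [1,3,3,3,9], [3,1,3,9,3], [1,9,3,3,3]]),
     ([1,3,3,9,9], [[1,3,9,9,3], [1,3,3,9,9], [1,3,9,3,9], [1,9,3,9,3], [1,9,9,3,3], [1,9,3,3,9], [3,3,9,9,1]]),
     ([1,7,7,7,9], [[7,7,7,9,1], [1,7,9,7,7], [1,9,7,7,7], [1,7,7,9,7], [7,7,1,7,9], [7,1,7,9,7], [1,7,7,7,9]]),
     ([1,7,7,9,9], [[1,7,9,9,7], [1,9,7,9,7], [7,1,9,9,7], [1,7,9,7,9], [1,9,7,7,9], [1,7,7,9,9], [1,9,9,7,7]]),
     ([1,7,9,9,9], [[7,9,9,1,9], [1,9,9,7,9], [1,7,9,9,9], [1,9,7,9,9], [7,1,9,9,9], [1,9,9,9,7], [9,1,9,7,9]]),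
     ([3,3,3,7,7], [[3,7,3,7,3], [3,3,3,7,7], [7,3,7,3,3], [3,7,7,3,3], [3,3,7,3,7], [3,3,7,7,3], [3,7,3,3,7]]),
     ([3,3,3,9,9], [[9,3,9,3,3], [3,3,9,9,3], [3,3,3,9,9], [3,3,9,3,9], [3,9,3,9,3], [3,9,9,3,3], [3,9,3,3,9]]),
     ([3,3,7,7,7], [[3,7,7,3,7], [3,7,7,7,3], [3,3,7,7,7], [7,3,3,7,7], [3,7,3,7,7], [7,7,7,3,3], [7,3,7,3,7]]),
     ([3,3,9,9,9], [[3,3,9,9,9], [9,9,9,3,3], [3,9,9,9,3], [3,9,3,9,9], [3,9,9,3,9], [9,3,3,9,9], [9,3,9,3,9]]),
     ([7,7,7,9,9], [[7,9,7,7,9], [7,7,7,9,9], [7,9,9,7,7], [7,7,9,9,7], [7,9,7,9,7], [9,7,9,7,7], [7,7,9,7,9]]),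
     ([7,7,9,9,9], [[9,7,9,7,9], [7,9,9,9,7], [9,7,7,9,9], [9,9,9,7,7], [7,9,9,7,9], [7,7,9,9,9], [7,9,7,9,9]])]"

lemma residue_systems_mod_7_complete:
  assumes "(ts, wss) \<in> set residue_systems_mod_7"
  shows "residue_complete 7 ts"
proof (rule residue_completeI)
  have "\<forall>(ts, wss)\<in>set residue_systems_mod_7.
          map (\<lambda>ws. decimal ws mod 7) wss = [0..<7] \<and> (\<forall>ws\<in>set wss. sort ws = ts)"
    by (simp add: residue_systems_mod_7_def decimal_def upt_rec)
  then have "map (\<lambda>ws. decimal ws mod 7) wss = [0..<7]" "\<forall>ws\<in>set wss. sort ws = ts"
    using assms by auto
  then show "map (\<lambda>ws. decimal ws mod 7) wss = [0..<7]" "\<forall>ws\<in>set wss. mset ws = mset ts"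
    by (auto simp flip: mset_sort)
qed

lemma mset_subset_eq_if_count_list_le:
  assumes "set xs \<subseteq> A" "\<forall>x\<in>A. count_list xs x \<le> count_list ys x"
  shows "mset xs \<subseteq># mset ys"
  using assms unfolding subseteq_mset_def count_mset by (metis count_notin le0 subsetD)

lemma mset_eq_if_count_list_eq:
  assumes "set xs \<subseteq> A" "set ys \<subseteq> A" "\<forall>x\<in>A. count_list xs x = count_list ys x"
  shows "mset xs = mset ys"
  using assms by (intro multiset_eqI) (metis count_mset count_notin subsetD)

lemma count_list_replicate: "count_list (replicate n x) y = (if x = y then n else 0)"
  by (induction n) auto

definition exceptional_digit_lists :: "nat \<Rightarrow> nat list list" where
  "exceptional_digit_lists N =
     [replicate N x. x \<leftarrow> [1, 3, 7, 9]] @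
     [replicate (N - 1) x @ [y]. x \<leftarrow> [1, 3, 7, 9], y \<leftarrow> [1, 3, 7, 9], x \<noteq> y] @
     [replicate (N - 2) 1 @ [7, 9], [1, 3] @ replicate (N - 2) 9] @
     (if N = 4 then
        [[x, x, y, y]. x \<leftarrow> [1, 3, 7, 9], y \<leftarrow> [1, 3, 7, 9], x < y] @
        [[1, 1, 3, 9], [1, 3, 3, 9], [1, 7, 7, 9], [1, 7, 9, 9]]
      else [])"

lemma digit_counts_dominate_complete_or_exceptional:
  assumes "a + b + c + e = n + 2" "2 \<le> n"
  shows "(\<exists>(ts, wss)\<in>set residue_systems_mod_7. set ts \<subseteq> {1, 3, 7, 9} \<and>
            count_list ts 1 \<le> a \<and> count_list ts 3 \<le> b \<and>
            count_list ts 7 \<le> c \<and> count_list ts 9 \<le> e) \<or>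
         (\<exists>rs\<in>set (exceptional_digit_lists (n + 2)). set rs \<subseteq> {1, 3, 7, 9} \<and>
            count_list rs 1 = a \<and> count_list rs 3 = b \<and>
            count_list rs 7 = c \<and> count_list rs 9 = e)"
  using assms
  (* Splitting on which digits occur keeps each presburger call small. *)
  by (simp add: residue_systems_mod_7_def exceptional_digit_lists_def count_list_replicate
      set_replicate_conv_if conj_disj_distribR ex_disj_distrib)
    (cases "a = 0"; cases "b = 0"; cases "c = 0"; cases "e = 0"; simp; presburger)

lemma complete_subset_or_exceptional:
  assumes digits: "set ds \<subseteq> {1, 3, 7, 9}" and "4 \<le> length ds"
  shows "(\<exists>(ts, wss)\<in>set residue_systems_mod_7. mset ts \<subseteq># mset ds) \<or>
         (\<exists>rs\<in>set (exceptional_digit_lists (length ds)). mset rs = mset ds)"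
proof -
  define n where "n = length ds - 2"
  have n: "length ds = n + 2" "2 \<le> n"
    using assms(2) by (simp_all add: n_def)
  then have "count_list ds 1 + count_list ds 3 + count_list ds 7 + count_list ds 9 = n + 2"
    using sum_count_set[OF digits] by simp
  from digit_counts_dominate_complete_or_exceptional[OF this n(2)] show ?thesis
  proof (elim disjE)
    assume "\<exists>(ts, wss)\<in>set residue_systems_mod_7. set ts \<subseteq> {1, 3, 7, 9} \<and>
      count_list ts 1 \<le> count_list ds 1 \<and> count_list ts 3 \<le> count_list ds 3 \<and>
      count_list ts 7 \<le> count_list ds 7 \<and> count_list ts 9 \<le> count_list ds 9"
    then obtain ts wss where "(ts, wss) \<in> set residue_systems_mod_7" "mset ts \<subseteq># mset ds"
      using mset_subset_eq_if_count_list_le[of _ "{1, 3, 7, 9}"] by fastforce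
    then show ?thesis
      by blast
  next
    assume "\<exists>rs\<in>set (exceptional_digit_lists (n + 2)). set rs \<subseteq> {1, 3, 7, 9} \<and>
      count_list rs 1 = count_list ds 1 \<and> count_list rs 3 = count_list ds 3 \<and>
      count_list rs 7 = count_list ds 7 \<and> count_list rs 9 = count_list ds 9"
    then obtain rs where "rs \<in> set (exceptional_digit_lists (length ds))" "mset rs = mset ds"
      using mset_eq_if_count_list_eq[OF _ digits] n(1) by fastforce
    then show ?thesis
      by blast
  qed
qed

lemma list_all2_bex_set2:
  "list_all2 P xs ys \<Longrightarrow> x \<in> set xs \<Longrightarrow> \<exists>y\<in>set ys. P x y"
  by (induction xs ys rule: list_all2_induct) auto

lemma replicate_numeral:
  "replicate 1 x = [x]"
  "replicate (numeral n) x = x # replicate (pred_numeral n) x"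
  by (simp_all add: numeral_eq_Suc)

definition composite_arrangements :: "(nat list \<times> nat) list" where
  "composite_arrangements =
    [([1,1,1,1], 11), ([7,7,7,7], 7), ([7,1,1,1], 13),
     ([3,1,3,3], 13), ([3,3,3,7], 47), ([7,7,7,1], 19),
     ([9,9,1,9], 7), ([9,9,9,7], 13), ([1,9,3,9], 7),
     ([3,3,1,1], 7), ([1,7,7,1], 7), ([9,1,9,1], 7),
     ([3,7,7,3], 7), ([9,7,7,9], 7), ([1,3,9,1], 13),
     ([1,3,9,3], 7), ([1,7,9,9], 7), ([1,1,1,1,1], 41),
     ([7,7,7,7,7], 7), ([1,3,1,1,1], 7), ([1,1,7,1,1], 7),
     ([1,1,1,9,1], 19), ([3,3,3,1,3], 7), ([3,3,7,3,3], 7),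
     ([7,7,7,1,7], 23), ([7,3,7,7,7], 11), ([7,7,7,7,9], 13),
     ([1,9,9,9,9], 7), ([9,9,7,9,9], 7), ([1,1,1,7,9], 7),
     ([3,9,9,9,1], 7), ([1,1,1,1,3,1], 19), ([1,1,1,9,1,1], 17),
     ([3,3,3,1,3,3], 131), ([3,7,3,3,3,3], 31), ([3,7,7,7,7,7], 19),
     ([9,7,7,7,7,7], 43), ([9,9,9,9,9,1], 17), ([9,7,9,9,9,9], 17),
     ([1,1,1,9,1,7], 13), ([1,9,3,9,9,9], 13), ([1,1,1,1,1,1,1], 239),
     ([7,7,7,7,7,7,7], 7), ([1,1,1,1,1,1,7], 7), ([3,1,3,3,3,3,3], 7),
     ([3,3,3,3,3,3,7], 7), ([7,7,7,1,7,7,7], 13), ([9,9,9,9,1,9,9], 7),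
     ([7,9,9,9,9,9,9], 7), ([1,9,9,3,9,9,9], 7), ([1,1,1,1,1,1,1,1], 11),
     ([7,7,7,7,7,7,7,7], 7), ([1,1,3,1,1,1,1,1], 7), ([1,1,1,7,1,1,1,1], 7),
     ([1,1,1,1,1,1,9,1], 7), ([3,3,3,3,1,3,3,3], 7), ([3,3,3,7,3,3,3,3], 7),
     ([7,7,7,7,7,7,7,1], 17), ([7,7,7,3,7,7,7,7], 13), ([7,7,7,7,9,7,7,7], 17),
     ([9,1,9,9,9,9,9,9], 7), ([9,9,9,7,9,9,9,9], 7), ([1,1,1,1,7,9,1,1], 7),
     ([1,9,9,9,9,3,9,9], 7), ([1,1,1,1,3,1,1,1,1], 7), ([1,1,1,1,1,1,1,1,9], 7),
     ([1,3,3,3,3,3,3,3,3], 7), ([3,3,3,3,3,7,3,3,3], 7), ([7,3,7,7,7,7,7,7,7], 11),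
     ([7,7,9,7,7,7,7,7,7], 17), ([9,9,9,1,9,9,9,9,9], 7), ([9,9,9,9,9,7,9,9,9], 7),
     ([1,1,1,1,1,1,7,9,1], 7), ([1,9,9,9,3,9,9,9,9], 7), ([1,1,1,1,1,1,1,1,1,1], 11),
     ([7,7,7,7,7,7,7,7,7,7], 7), ([1,1,1,1,7,1,1,1,1,1], 7), ([3,3,3,3,3,1,3,3,3,3], 7),
     ([3,3,3,3,7,3,3,3,3,3], 7), ([7,7,7,7,7,7,7,1,7,7], 29), ([9,9,1,9,9,9,9,9,9,9], 7),
     ([9,9,9,9,7,9,9,9,9,9], 7), ([1,9,3,9,9,9,9,9,9,9], 7)]"

lemma composite_arrangements_valid:
  "list_all2 (\<lambda>rs (ws, p). sort ws = sort rs \<and> 1 < p \<and> p < decimal ws \<and> p dvd decimal ws)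
     (filter (\<lambda>rs. \<not> 3 dvd sum_list rs) (concat (map exceptional_digit_lists [4..<11])))
     composite_arrangements"
  (* Flipping One_nat_def keeps digit sums as numerals, on which dvd evaluates. *)
  by (simp add: composite_arrangements_def exceptional_digit_lists_def decimal_def replicate_numeral
      flip: One_nat_def)

lemma not_permutable_prime_if_exceptional:
  assumes "rs \<in> set (exceptional_digit_lists (length ds))" "mset rs = mset ds"
    and "4 \<le> length ds" "length ds \<le> 10" "0 \<notin> set ds"
  shows "\<not> permutable_prime ds"
proof
  assume prime: "permutable_prime ds"
  have "sum_list rs = sum_list ds"
    using assms(2) by (metis sum_mset_sum_list)
  then have "\<not> 3 dvd sum_list rs"
    using permutable_prime_digit_sum[OF prime _ assms(5)] assms(3) by simp
  moreover have "length ds \<in> set [4..<11]"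
    unfolding set_upt using assms(3,4) by simp
  ultimately have "rs \<in> set
      (filter (\<lambda>rs. \<not> 3 dvd sum_list rs) (concat (map exceptional_digit_lists [4..<11])))"
    using assms(1) unfolding set_map set_filter set_concat by blast
  from list_all2_bex_set2[OF composite_arrangements_valid this]
  obtain ws p where "sort ws = sort rs" "1 < p" "p < decimal ws" "p dvd decimal ws"
    by blast
  moreover have "mset ws = mset ds"
    using \<open>sort ws = sort rs\<close> assms(2) by (metis mset_sort)
  ultimately show False
    using not_permutable_prime_if_proper_divisor prime by blast
qed

lemma not_permutable_prime_4_to_10_digits:
  assumes "4 \<le> length ds" "length ds \<le> 10" "set ds \<subseteq> {..<10}"
  shows "\<not> permutable_prime ds"
proof
  assume prime: "permutable_prime ds"
  then have digits: "set ds \<subseteq> {1, 3, 7, 9}"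
    using permutable_prime_digits assms by simp
  then have nonzero: "0 \<notin> set ds"
    by auto
  have "(7::nat) < 10 ^ (length ds - 1)"
    using assms(1) self_le_power[of "10::nat" "length ds - 1"] by simp
  with complete_subset_or_exceptional[OF digits assms(1)] show False
    using residue_systems_mod_7_complete not_permutable_prime_if_residue_complete[of 7 _ ds]
      not_permutable_prime_if_exceptional[OF _ _ assms(1,2) nonzero] nonzero prime
    by fastforce
qed

theorem mainTheorem2:
  fixes N :: nat
  assumes "4 \<le> N" and "N \<le> 10"
  shows "\<not> (\<exists>d :: nat list. length d = N \<and> (\<forall>i<N. d ! i < 10) \<and> d ! 0 \<noteq> 0 \<and>
            (\<forall>\<sigma>. \<sigma> permutes {..<N} \<longrightarrow>
               prime (\<Sum>i<N. d ! (\<sigma> i) * 10 ^ (N - 1 - i))))"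
proof
  assume "\<exists>d :: nat list. length d = N \<and> (\<forall>i<N. d ! i < 10) \<and> d ! 0 \<noteq> 0 \<and>
            (\<forall>\<sigma>. \<sigma> permutes {..<N} \<longrightarrow>
               prime (\<Sum>i<N. d ! (\<sigma> i) * 10 ^ (N - 1 - i)))"
  then obtain d :: "nat list" where len: "length d = N" and digits: "\<forall>i<N. d ! i < 10"
    and prime: "\<forall>\<sigma>. \<sigma> permutes {..<N} \<longrightarrow> prime (\<Sum>i<N. d ! (\<sigma> i) * 10 ^ (N - 1 - i))"
    by blast
  have "permutable_prime d"
    using prime permutable_prime_iff_permutes[OF len] by blast
  moreover have "set d \<subseteq> {..<10}"
    using digits len by (auto simp: in_set_conv_nth)
  ultimately show False
    using not_permutable_prime_4_to_10_digits assms len by blast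
qed

end
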